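(* Let $\{\hat x_t\}_{t\ge0}$, $\hat x_t=\frac1M\sum_m x_t^m$, be the average points generated by Algorithm SAVIC (described in the context), and let $\hat D^t$ denote the scaling matrix at iteration $t$, obtained by the update rules in the context, where $D^0$ and all $H^t$ are diagonal with $\alpha I\preceq D^0\preceq\Gamma I$ and $\alpha I\preceq H^t\preceq\Gamma I$ for some $0<\alpha\le\Gamma$. Then $$\|\hat x_{t+1}-x_*\|^2_{\hat D^{t+1}}\le\big(1+(1-\beta_{t+1})C\big)\|\hat x_{t+1}-x_*\|^2_{\hat D^t},$$ with $C=\frac{\Gamma^2}{2\alpha^2}$ for the squared update rule and $C=\frac{2\Gamma}{\alpha}$ for the linear update rule. In particular, if $\beta_{t+1}\ge1-\frac{\gamma\mu\alpha^2}{\Gamma^3}$ (squared rule) or $\beta_{t+1}\ge1-\frac{\gamma\mu\alpha}{4\Gamma^2}$ (linear rule), then $$\|\hat x_{t+1}-x_*\|^2_{\hat D^{t+1}}\le\left(1+\frac{\gamma\mu}{2\Gamma}\right)\|\hat x_{t+1}-x_*\|^2_{\hat D^t}.$$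
   Context: Problem: minimize $f(x)=\frac1M\sum_{m=1}^Mf_m(x)$ over $\mathbb R^d$, $x_*$ a solution; $\mu\ge0$ is the strong convexity constant of the $f_m$, $\gamma>0$ the stepsize. For a positive definite matrix $A$, $\|x\|_A^2=\langle x,Ax\rangle$. Update rules: diagonal matrices $D^t$ satisfy either the squared rule $(D^t)^2=\beta_t(D^{t-1})^2+(1-\beta_t)(H^t)^2$ or the linear rule $D^t=\beta_tD^{t-1}+(1-\beta_t)H^t$, with $\beta_t\in[0,1]$ and $H^t$ diagonal; then $(\hat D^t)_{ii}=\max\{\alpha,|D^t_{ii}|\}$. Algorithm SAVIC: stepsize $\gamma$, $x_0^m=x_0$, synchronization times $t_0=0<t_1<\dots$; at $t=t_p$ the preconditioner $\hat D^{t_p}$ is updated and is used (by all clients) for all $t_p\le t<t_{p+1}$ (so the scaling matrix at iteration $t$ is $\hat D^{t_p}$); client $m$ samples $z_m\sim\mathcal D_m$ and sets $x_{t+1}^m=\frac1M\sum_j(x_t^j-\gamma(\hat D^{t_p})^{-1}\nabla f_j(x_t^j,z_j))$ if $t=t_p$ for some $p$, else $x_{t+1}^m=x_t^m-\gamma(\hat D^{t_p})^{-1}\nabla f_m(x_t^m,z_m)$. *)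

theory Defs
  imports "HOL-Analysis.Analysis"
begin

type_synonym 'n mat = "real ^ 'n ^ 'n"

definition is_diag :: "'n::finite mat \<Rightarrow> bool" where
  "is_diag A \<longleftrightarrow> (\<forall>i j. i \<noteq> j \<longrightarrow> A $ i $ j = 0)"

definition loewner_le :: "'n::finite mat \<Rightarrow> 'n mat \<Rightarrow> bool" where
  "loewner_le A B \<longleftrightarrow> (\<forall>x. x \<bullet> (A *v x) \<le> x \<bullet> (B *v x))"

definition wnorm2 :: "real ^ 'n::finite \<Rightarrow> 'n mat \<Rightarrow> real" where
  "wnorm2 x A = x \<bullet> (A *v x)"

definition clip :: "real \<Rightarrow> 'n::finite mat \<Rightarrow> 'n mat" where
  "clip \<alpha> D = (\<chi> i j. if i = j then max \<alpha> \<bar>D $ i $ i\<bar> else 0)"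

definition update_rule :: "bool \<Rightarrow> real \<Rightarrow> 'n::finite mat \<Rightarrow> 'n mat \<Rightarrow> 'n mat \<Rightarrow> bool" where
  "update_rule sq \<beta> Dprev H D \<longleftrightarrow>
     (if sq then D ** D = \<beta> *\<^sub>R (Dprev ** Dprev) + (1 - \<beta>) *\<^sub>R (H ** H)
      else D = \<beta> *\<^sub>R Dprev + (1 - \<beta>) *\<^sub>R H)"

definition strongly_convex :: "real \<Rightarrow> ('a::real_inner \<Rightarrow> real) \<Rightarrow> bool" where
  "strongly_convex \<mu> f \<longleftrightarrow> (\<forall>x y s. 0 \<le> s \<and> s \<le> 1 \<longrightarrow>
     f (s *\<^sub>R x + (1 - s) *\<^sub>R y) \<le> s * f x + (1 - s) * f y - \<mu> / 2 * s * (1 - s) * (norm (x - y))\<^sup>2)"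

text \<open>The SAVIC recursion, for a fixed realization of the samples.
  x t m : iterate of client m (m < M) at time t; z t m : sample drawn by client m at time t;
  g m y \<zeta> : stochastic gradient of f_m at y with sample \<zeta>; S t : scaling matrix at iteration t;
  sync t : t is a synchronization time.\<close>
definition savic_iterates ::
  "nat \<Rightarrow> real \<Rightarrow> (nat \<Rightarrow> bool) \<Rightarrow> (nat \<Rightarrow> 'n::finite mat) \<Rightarrow> (nat \<Rightarrow> real ^ 'n \<Rightarrow> 'z \<Rightarrow> real ^ 'n)
     \<Rightarrow> (nat \<Rightarrow> nat \<Rightarrow> 'z) \<Rightarrow> real ^ 'n \<Rightarrow> (nat \<Rightarrow> nat \<Rightarrow> real ^ 'n) \<Rightarrow> bool" where
  "savic_iterates M \<gamma> sync S g z x0 x \<longleftrightarrow>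
     (\<forall>m<M. x 0 m = x0) \<and>
     (\<forall>t. \<forall>m<M. x (Suc t) m =
        (if sync t then (1 / real M) *\<^sub>R (\<Sum>j<M. x t j - \<gamma> *\<^sub>R (matrix_inv (S t) *v g j (x t j) (z t j)))
         else x t m - \<gamma> *\<^sub>R (matrix_inv (S t) *v g m (x t m) (z t m))))"

end

(* The claim holds for every vector.  Each update is a
   convex combination (of d^2 and h^2, resp. of d and h), so by induction every diagonal
   entry keeps its modulus in [alpha, Gamma] and clipping is inactive.  One update then
   inflates an entry by at most 1 + (1 - beta) C:
     squared rule:  d'^2 <= d^2 + (1 - beta) Gamma^2 <= (1 + (1 - beta) Gamma^2 / (2 alpha^2))^2 d^2,
     linear rule:   d' <= d + (1 - beta) Gamma <= (1 + (1 - beta) 2 Gamma / alpha) d.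
   The second claim is arithmetic on the threshold for beta. *)

theory Submission
  imports Defs
begin

lemma loewner_le_diag_le:
  fixes A B :: "'n::finite mat"
  assumes "loewner_le A B"
  shows "A $ i $ i \<le> B $ i $ i"
proof -
  have diag: "axis i 1 \<bullet> (C *v axis i 1) = C $ i $ i" for C :: "'n mat"
    by (simp add: matrix_vector_mult_basis inner_axis' column_def)
  show ?thesis
    using assms unfolding loewner_le_def by (metis diag)
qed

lemma loewner_le_scaled_id_diag:
  fixes A :: "'n::finite mat"
  assumes "loewner_le (a *\<^sub>R mat 1) A" "loewner_le A (b *\<^sub>R mat 1)"
  shows "a \<le> A $ i $ i" "A $ i $ i \<le> b"
  using loewner_le_diag_le[OF assms(1), of i] loewner_le_diag_le[OF assms(2), of i]
  by (simp_all add: mat_def)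

lemma is_diag_matrix_square_diag:
  fixes D :: "'n::finite mat"
  assumes "is_diag D"
  shows "(D ** D) $ i $ i = (D $ i $ i)\<^sup>2"
proof -
  have "D $ i $ k * D $ k $ i = (if k = i then (D $ i $ i)\<^sup>2 else 0)" for k
    using assms by (simp add: is_diag_def power2_eq_square)
  then show ?thesis by (simp add: matrix_matrix_mult_def)
qed

lemma wnorm2_clip:
  "wnorm2 v (clip a D) = (\<Sum>i\<in>UNIV. max a \<bar>D $ i $ i\<bar> * (v $ i)\<^sup>2)"
proof -
  have "(clip a D *v v) $ i = max a \<bar>D $ i $ i\<bar> * v $ i" for i
  proof -
    have "(if i = j then max a \<bar>D $ i $ i\<bar> else 0) * v $ j
        = (if j = i then max a \<bar>D $ i $ i\<bar> * v $ i else 0)" for j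
      by simp
    then show ?thesis by (simp add: clip_def matrix_vector_mult_def)
  qed
  then show ?thesis
    by (simp add: wnorm2_def inner_vec_def power2_eq_square mult_ac)
qed

lemma wnorm2_clip_nonneg: "0 \<le> wnorm2 v (clip a D)"
  by (simp add: wnorm2_clip sum_nonneg)

lemma wnorm2_clip_le_scaled:
  assumes "\<And>i. max a \<bar>D' $ i $ i\<bar> \<le> K * max a \<bar>D $ i $ i\<bar>"
  shows "wnorm2 v (clip a D') \<le> K * wnorm2 v (clip a D)"
proof -
  have "wnorm2 v (clip a D') \<le> (\<Sum>i\<in>UNIV. K * max a \<bar>D $ i $ i\<bar> * (v $ i)\<^sup>2)"
    unfolding wnorm2_clip by (intro sum_mono mult_right_mono assms) auto
  then show ?thesis
    by (simp add: wnorm2_clip sum_distrib_left mult.assoc)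
qed

lemma convex_comb_mem_interval:
  fixes u v :: real
  assumes "u \<in> {a..b}" "v \<in> {a..b}" "0 \<le> \<beta>" "\<beta> \<le> 1"
  shows "\<beta> * u + (1 - \<beta>) * v \<in> {a..b}"
  using convexD[OF convex_real_interval(5) assms(1,2), of \<beta> "1 - \<beta>"] assms(3,4) by simp

lemma sq_update_growth:
  fixes d h d' \<beta> \<alpha> \<Gamma> :: real
  assumes "0 < \<alpha>" "\<alpha> \<le> \<bar>d\<bar>" "\<bar>h\<bar> \<le> \<Gamma>" "0 \<le> \<beta>" "\<beta> \<le> 1"
    and "d'\<^sup>2 = \<beta> * d\<^sup>2 + (1 - \<beta>) * h\<^sup>2"
  shows "\<bar>d'\<bar> \<le> (1 + (1 - \<beta>) * (\<Gamma>\<^sup>2 / (2 * \<alpha>\<^sup>2))) * \<bar>d\<bar>"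
proof -
  define q where "q = (1 - \<beta>) * (\<Gamma>\<^sup>2 / (2 * \<alpha>\<^sup>2))"
  have q: "0 \<le> q" using assms by (simp add: q_def)
  have "h\<^sup>2 \<le> \<Gamma>\<^sup>2" using assms(3) by (metis abs_le_square_iff abs_of_nonneg abs_ge_zero order_trans)
  then have "(1 - \<beta>) * h\<^sup>2 \<le> (1 - \<beta>) * \<Gamma>\<^sup>2"
    using assms(5) by (intro mult_left_mono) auto
  moreover have "0 \<le> (1 - \<beta>) * d\<^sup>2" using assms(5) by simp
  ultimately have "d'\<^sup>2 \<le> d\<^sup>2 + (1 - \<beta>) * \<Gamma>\<^sup>2"
    using assms(6) by (simp add: algebra_simps)
  also have "\<dots> \<le> d\<^sup>2 + 2 * q * d\<^sup>2"
  proof -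
    have "\<alpha>\<^sup>2 \<le> d\<^sup>2" using assms(1,2) by (simp add: abs_le_square_iff[symmetric])
    then have "(1 - \<beta>) * \<Gamma>\<^sup>2 * \<alpha>\<^sup>2 \<le> (1 - \<beta>) * \<Gamma>\<^sup>2 * d\<^sup>2"
      using assms(5) by (intro mult_left_mono) auto
    then show ?thesis using assms(1) by (simp add: q_def field_simps)
  qed
  also have "\<dots> \<le> d\<^sup>2 + 2 * q * d\<^sup>2 + (q * d)\<^sup>2" by simp
  also have "\<dots> = ((1 + q) * \<bar>d\<bar>)\<^sup>2" by (simp add: power2_eq_square algebra_simps)
  finally have "\<bar>d'\<bar>\<^sup>2 \<le> ((1 + q) * \<bar>d\<bar>)\<^sup>2" by simp
  then show ?thesis
    unfolding q_def[symmetric] by (rule power2_le_imp_le) (use q in simp)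
qed

lemma lin_update_growth:
  fixes d h \<beta> \<alpha> \<Gamma> :: real
  assumes "0 < \<alpha>" "\<alpha> \<le> d" "\<alpha> \<le> h" "h \<le> \<Gamma>" "0 \<le> \<beta>" "\<beta> \<le> 1"
  shows "\<beta> * d + (1 - \<beta>) * h \<le> (1 + (1 - \<beta>) * (2 * \<Gamma> / \<alpha>)) * d"
proof -
  have "1 \<le> d / \<alpha>" using assms by simp
  then have "\<Gamma> * 1 \<le> \<Gamma> * (d / \<alpha>)" using assms by (intro mult_left_mono) auto
  also have "\<dots> \<le> 2 * \<Gamma> / \<alpha> * d" using assms by (simp add: field_simps)
  finally have "(1 - \<beta>) * \<Gamma> \<le> (1 - \<beta>) * (2 * \<Gamma> / \<alpha> * d)"
    using assms by (intro mult_left_mono) auto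
  moreover have "(1 - \<beta>) * h \<le> (1 - \<beta>) * \<Gamma>" "0 \<le> (1 - \<beta>) * d"
    using assms by (auto intro: mult_left_mono)
  ultimately show ?thesis by (simp add: algebra_simps)
qed

text \<open>The squared rule determines a diagonal entry only up to sign; the linear rule keeps it positive.\<close>
definition admissible_entry :: "bool \<Rightarrow> real \<Rightarrow> real \<Rightarrow> real \<Rightarrow> bool" where
  "admissible_entry sq \<alpha> \<Gamma> d \<longleftrightarrow> \<alpha> \<le> \<bar>d\<bar> \<and> \<bar>d\<bar> \<le> \<Gamma> \<and> (sq \<or> 0 \<le> d)"

definition entry_update :: "bool \<Rightarrow> real \<Rightarrow> real \<Rightarrow> real \<Rightarrow> real \<Rightarrow> bool" where
  "entry_update sq \<beta> d h d' \<longleftrightarrow>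
     (if sq then d'\<^sup>2 = \<beta> * d\<^sup>2 + (1 - \<beta>) * h\<^sup>2 else d' = \<beta> * d + (1 - \<beta>) * h)"

definition growth_const :: "bool \<Rightarrow> real \<Rightarrow> real \<Rightarrow> real" where
  "growth_const sq \<alpha> \<Gamma> = (if sq then \<Gamma>\<^sup>2 / (2 * \<alpha>\<^sup>2) else 2 * \<Gamma> / \<alpha>)"

lemma update_rule_entry_update:
  assumes "is_diag D" "is_diag H" "is_diag D'" "update_rule sq \<beta> D H D'"
  shows "entry_update sq \<beta> (D $ i $ i) (H $ i $ i) (D' $ i $ i)"
proof (cases sq)
  case True
  then have "(D' ** D') $ i $ i = (\<beta> *\<^sub>R (D ** D) + (1 - \<beta>) *\<^sub>R (H ** H)) $ i $ i"
    using assms(4) by (simp add: update_rule_def)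
  then show ?thesis
    using True assms(1-3) by (simp add: entry_update_def is_diag_matrix_square_diag)
next
  case False
  then show ?thesis using assms(4) by (simp add: update_rule_def entry_update_def)
qed

lemma entry_update_admissible:
  assumes "0 < \<alpha>" "admissible_entry sq \<alpha> \<Gamma> d" "\<alpha> \<le> h" "h \<le> \<Gamma>" "0 \<le> \<beta>" "\<beta> \<le> 1"
    and "entry_update sq \<beta> d h d'"
  shows "admissible_entry sq \<alpha> \<Gamma> d'"
proof (cases sq)
  case True
  have "d\<^sup>2 \<in> {\<alpha>\<^sup>2..\<Gamma>\<^sup>2}" "h\<^sup>2 \<in> {\<alpha>\<^sup>2..\<Gamma>\<^sup>2}"
    using assms(1-4) by (auto simp: admissible_entry_def abs_le_square_iff[symmetric])
  then have "d'\<^sup>2 \<in> {\<alpha>\<^sup>2..\<Gamma>\<^sup>2}"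
    using convex_comb_mem_interval assms(5-7) True by (simp add: entry_update_def)
  then show ?thesis
    using assms(1,3,4) True by (auto simp: admissible_entry_def abs_le_square_iff[symmetric])
next
  case False
  have "d \<in> {\<alpha>..\<Gamma>}" "h \<in> {\<alpha>..\<Gamma>}"
    using assms(2-4) False by (auto simp: admissible_entry_def)
  then have "d' \<in> {\<alpha>..\<Gamma>}"
    using convex_comb_mem_interval assms(5-7) False by (simp add: entry_update_def)
  then show ?thesis using assms(1) by (simp add: admissible_entry_def)
qed

lemma entry_update_growth:
  assumes "0 < \<alpha>" "admissible_entry sq \<alpha> \<Gamma> d" "\<alpha> \<le> h" "h \<le> \<Gamma>" "0 \<le> \<beta>" "\<beta> \<le> 1"
    and "entry_update sq \<beta> d h d'"
  shows "\<bar>d'\<bar> \<le> (1 + (1 - \<beta>) * growth_const sq \<alpha> \<Gamma>) * \<bar>d\<bar>"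
proof (cases sq)
  case True
  then show ?thesis
    using sq_update_growth[of \<alpha> d h \<Gamma> \<beta> d'] assms
    by (simp add: admissible_entry_def entry_update_def growth_const_def)
next
  case False
  then have "0 \<le> d" "\<alpha> \<le> d" "d' = \<beta> * d + (1 - \<beta>) * h"
    using assms(2,7) by (auto simp: admissible_entry_def entry_update_def)
  moreover have "0 \<le> \<beta> * d + (1 - \<beta>) * h"
    using calculation assms by simp
  ultimately show ?thesis
    using lin_update_growth[of \<alpha> d h \<Gamma> \<beta>] assms False by (simp add: growth_const_def)
qed

lemma growth_const_threshold:
  assumes "0 < \<alpha>" "0 < \<Gamma>"
    and "1 - \<beta> \<le> (if sq then c * \<alpha>\<^sup>2 / \<Gamma> ^ 3 else c * \<alpha> / (4 * \<Gamma>\<^sup>2))"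
  shows "(1 - \<beta>) * growth_const sq \<alpha> \<Gamma> \<le> c / (2 * \<Gamma>)"
proof -
  have "0 \<le> growth_const sq \<alpha> \<Gamma>" using assms(1,2) by (simp add: growth_const_def)
  then have "(1 - \<beta>) * growth_const sq \<alpha> \<Gamma>
      \<le> (if sq then c * \<alpha>\<^sup>2 / \<Gamma> ^ 3 else c * \<alpha> / (4 * \<Gamma>\<^sup>2)) * growth_const sq \<alpha> \<Gamma>"
    using assms(3) by (rule mult_right_mono[rotated])
  also have "\<dots> = c / (2 * \<Gamma>)"
    using assms(1,2) by (simp add: growth_const_def field_simps power2_eq_square power3_eq_cube)
  finally show ?thesis .
qed

locale preconditioner_sequence =
  fixes sq :: bool and \<alpha> \<Gamma> :: real and \<beta> :: "nat \<Rightarrow> real"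
    and D H :: "nat \<Rightarrow> 'n::finite mat" and sync :: "nat \<Rightarrow> bool"
  assumes alpha_pos: "0 < \<alpha>"
    and D0_diag: "is_diag (D 0)" and D0_bounds: "\<And>i. \<alpha> \<le> D 0 $ i $ i \<and> D 0 $ i $ i \<le> \<Gamma>"
    and H_diag: "\<And>t. is_diag (H t)" and H_bounds: "\<And>t i. \<alpha> \<le> H t $ i $ i \<and> H t $ i $ i \<le> \<Gamma>"
    and beta_bounds: "\<And>t. 0 \<le> \<beta> t \<and> \<beta> t \<le> 1"
    and D_update: "\<And>t. sync (Suc t) \<Longrightarrow>
      is_diag (D (Suc t)) \<and> update_rule sq (\<beta> (Suc t)) (D t) (H (Suc t)) (D (Suc t))"
    and D_keep: "\<And>t. \<not> sync (Suc t) \<Longrightarrow> D (Suc t) = D t"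
begin

lemma Gamma_pos: "0 < \<Gamma>"
  using alpha_pos D0_bounds by (meson less_le_trans)

lemma D_diag: "is_diag (D t)"
  by (induction t) (use D0_diag D_update D_keep in metis)+

lemma D_entry_update:
  "sync (Suc t) \<Longrightarrow> entry_update sq (\<beta> (Suc t)) (D t $ i $ i) (H (Suc t) $ i $ i) (D (Suc t) $ i $ i)"
  using update_rule_entry_update D_diag H_diag D_update by blast

lemma D_admissible: "admissible_entry sq \<alpha> \<Gamma> (D t $ i $ i)"
proof (induction t)
  case 0
  then show ?case using D0_bounds[of i] alpha_pos by (auto simp: admissible_entry_def)
next
  case (Suc t)
  show ?case
  proof (cases "sync (Suc t)")
    case True
    then show ?thesis
      using entry_update_admissible[OF alpha_pos Suc] H_bounds beta_bounds D_entry_update by blast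
  next
    case False
    then show ?thesis using Suc D_keep by simp
  qed
qed

lemma clip_D_entry_growth:
  "max \<alpha> \<bar>D (Suc t) $ i $ i\<bar> \<le> (1 + (1 - \<beta> (Suc t)) * growth_const sq \<alpha> \<Gamma>) * max \<alpha> \<bar>D t $ i $ i\<bar>"
proof -
  have "max \<alpha> \<bar>D s $ i $ i\<bar> = \<bar>D s $ i $ i\<bar>" for s
    using D_admissible[of s i] by (simp add: admissible_entry_def)
  moreover have "\<bar>D (Suc t) $ i $ i\<bar> \<le> (1 + (1 - \<beta> (Suc t)) * growth_const sq \<alpha> \<Gamma>) * \<bar>D t $ i $ i\<bar>"
  proof (cases "sync (Suc t)")
    case True
    then show ?thesis
      using entry_update_growth[OF alpha_pos D_admissible] H_bounds beta_bounds D_entry_update by blast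
  next
    case False
    have "0 \<le> growth_const sq \<alpha> \<Gamma>" using alpha_pos Gamma_pos by (simp add: growth_const_def)
    then show ?thesis using False D_keep beta_bounds[of "Suc t"] by (simp add: mult_le_cancel_right1)
  qed
  ultimately show ?thesis by simp
qed

lemma wnorm2_clip_D_growth:
  "wnorm2 v (clip \<alpha> (D (Suc t)))
     \<le> (1 + (1 - \<beta> (Suc t)) * growth_const sq \<alpha> \<Gamma>) * wnorm2 v (clip \<alpha> (D t))"
  by (rule wnorm2_clip_le_scaled) (rule clip_D_entry_growth)

end

theorem corollary1:
  fixes M :: nat and f :: "nat \<Rightarrow> real ^ 'n::finite \<Rightarrow> real"
    and xs x0 :: "real ^ 'n" and \<mu> \<gamma> \<alpha> \<Gamma> :: real
    and sq :: bool and \<beta> :: "nat \<Rightarrow> real"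
    and D H :: "nat \<Rightarrow> real ^ 'n ^ 'n" and sync :: "nat \<Rightarrow> bool"
    and g :: "nat \<Rightarrow> real ^ 'n \<Rightarrow> 'z \<Rightarrow> real ^ 'n" and z :: "nat \<Rightarrow> nat \<Rightarrow> 'z"
    and x :: "nat \<Rightarrow> nat \<Rightarrow> real ^ 'n"
  assumes M: "M \<ge> 1"
    and mu: "\<mu> \<ge> 0" and sc: "\<And>m. m < M \<Longrightarrow> strongly_convex \<mu> (f m)"
    and opt: "\<And>y. (1 / real M) * (\<Sum>m<M. f m xs) \<le> (1 / real M) * (\<Sum>m<M. f m y)"
    and gam: "\<gamma> > 0"
    and alpha: "0 < \<alpha>" "\<alpha> \<le> \<Gamma>"
    and D0: "is_diag (D 0)" "loewner_le (\<alpha> *\<^sub>R mat 1) (D 0)" "loewner_le (D 0) (\<Gamma> *\<^sub>R mat 1)"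
    and Hb: "\<And>t. is_diag (H t)" "\<And>t. loewner_le (\<alpha> *\<^sub>R mat 1) (H t)"
            "\<And>t. loewner_le (H t) (\<Gamma> *\<^sub>R mat 1)"
    and beta: "\<And>t. 0 \<le> \<beta> t \<and> \<beta> t \<le> 1"
    and sync0: "sync 0"
    and Dupd: "\<And>t. sync (Suc t) \<Longrightarrow> is_diag (D (Suc t)) \<and> update_rule sq (\<beta> (Suc t)) (D t) (H (Suc t)) (D (Suc t))"
    and Dkeep: "\<And>t. \<not> sync (Suc t) \<Longrightarrow> D (Suc t) = D t"
    and iter: "savic_iterates M \<gamma> sync (\<lambda>t. clip \<alpha> (D t)) g z x0 x"
  defines "xhat \<equiv> \<lambda>t. (1 / real M) *\<^sub>R (\<Sum>m<M. x t m)"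
    and "Dh \<equiv> \<lambda>t. clip \<alpha> (D t)"
    and "C \<equiv> (if sq then \<Gamma>\<^sup>2 / (2 * \<alpha>\<^sup>2) else 2 * \<Gamma> / \<alpha>)"
  shows "(\<forall>t. wnorm2 (xhat (Suc t) - xs) (Dh (Suc t))
              \<le> (1 + (1 - \<beta> (Suc t)) * C) * wnorm2 (xhat (Suc t) - xs) (Dh t))
       \<and> (\<forall>t. \<beta> (Suc t) \<ge> (if sq then 1 - \<gamma> * \<mu> * \<alpha>\<^sup>2 / \<Gamma> ^ 3 else 1 - \<gamma> * \<mu> * \<alpha> / (4 * \<Gamma>\<^sup>2))
              \<longrightarrow> wnorm2 (xhat (Suc t) - xs) (Dh (Suc t))
                    \<le> (1 + \<gamma> * \<mu> / (2 * \<Gamma>)) * wnorm2 (xhat (Suc t) - xs) (Dh t))"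
proof -
  interpret preconditioner_sequence sq \<alpha> \<Gamma> \<beta> D H sync
    using alpha(1) D0 Hb beta Dupd Dkeep loewner_le_scaled_id_diag
    by unfold_locales blast+
  have C: "C = growth_const sq \<alpha> \<Gamma>"
    by (simp add: C_def growth_const_def)
  have step: "wnorm2 v (Dh (Suc t)) \<le> (1 + (1 - \<beta> (Suc t)) * C) * wnorm2 v (Dh t)" for v t
    unfolding Dh_def C by (rule wnorm2_clip_D_growth)
  have "wnorm2 v (Dh (Suc t)) \<le> (1 + \<gamma> * \<mu> / (2 * \<Gamma>)) * wnorm2 v (Dh t)"
    if "\<beta> (Suc t) \<ge> (if sq then 1 - \<gamma> * \<mu> * \<alpha>\<^sup>2 / \<Gamma> ^ 3 else 1 - \<gamma> * \<mu> * \<alpha> / (4 * \<Gamma>\<^sup>2))"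
    for v t
  proof -
    have "(1 - \<beta> (Suc t)) * C \<le> \<gamma> * \<mu> / (2 * \<Gamma>)"
      unfolding C using growth_const_threshold[OF alpha_pos Gamma_pos, of "\<beta> (Suc t)" sq "\<gamma> * \<mu>"] that
      by (cases sq) simp_all
    then have "(1 + (1 - \<beta> (Suc t)) * C) * wnorm2 v (Dh t) \<le> (1 + \<gamma> * \<mu> / (2 * \<Gamma>)) * wnorm2 v (Dh t)"
      unfolding Dh_def by (intro mult_right_mono wnorm2_clip_nonneg) simp
    then show ?thesis using step order_trans by blast
  qed
  then show ?thesis using step by blast
qed

end
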